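(* Define $\psi:\mathbb R^5\to\mathbb R$ by \[ \begin{aligned} \psi(w_0,w_1,w_2,w_3,w_4)&=-\tfrac12w_0^2+\tfrac92(w_3^2+w_4^2)+\sqrt6\,w_0(w_3^2+w_4^2)+\tfrac{3\sqrt6}{2}w_4(w_2^2-w_1^2)\\ &\quad-3\sqrt6\,w_1w_2w_3-\tfrac{\sqrt6}{2}w_0(w_1^2+w_2^2)-\tfrac{\sqrt6}{9}w_0^3. \end{aligned} \] Then for all $(w_0,w_1,w_2,w_3,w_4)\in\mathbb R^5$, \[ \psi(w_0,w_1,w_2,w_3,w_4)\ge\psi\left(w_0,\sqrt{w_1^2+w_2^2},0,0,\sqrt{w_3^2+w_4^2}\right). \] *)

theory Defs
  imports Complex_Main
begin

definition psi :: "real \<Rightarrow> real \<Rightarrow> real \<Rightarrow> real \<Rightarrow> real \<Rightarrow> real" where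
  "psi w0 w1 w2 w3 w4 =
     - (1/2) * w0^2 + (9/2) * (w3^2 + w4^2) + sqrt 6 * w0 * (w3^2 + w4^2)
     + (3 * sqrt 6 / 2) * w4 * (w2^2 - w1^2)
     - 3 * sqrt 6 * w1 * w2 * w3
     - (sqrt 6 / 2) * w0 * (w1^2 + w2^2)
     - (sqrt 6 / 9) * w0^3"

end

theory Submission
  imports Defs
begin

text \<open>Only the term \<open>w4 (w2\<^sup>2 - w1\<^sup>2) - 2 w1 w2 w3\<close> of \<open>psi\<close> depends on more than
  the radii \<open>r = sqrt (w1\<^sup>2 + w2\<^sup>2)\<close>, \<open>s = sqrt (w3\<^sup>2 + w4\<^sup>2)\<close>. It is the inner product of
  \<open>(w4, w3)\<close> with \<open>(w2\<^sup>2 - w1\<^sup>2, -2 w1 w2)\<close>, the latter a vector of norm \<open>r\<^sup>2\<close>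
  (the square of \<open>w2 - i w1\<close>), so by Cauchy-Schwarz it is at least \<open>-s r\<^sup>2\<close>,
  which is its value at \<open>(r, 0, 0, s)\<close>.\<close>

lemma abs_inner_le_norm_mult_norm:
  fixes a b c d :: real
  shows "\<bar>a * c + b * d\<bar> \<le> sqrt (a^2 + b^2) * sqrt (c^2 + d^2)"
proof -
  have "(a * c + b * d)^2 \<le> (a^2 + b^2) * (c^2 + d^2)"
    using zero_le_power2 [of "a * d - b * c"] by (simp add: algebra_simps power2_eq_square)
  then show ?thesis
    by (metis real_sqrt_abs real_sqrt_le_mono real_sqrt_mult)
qed

lemma cubic_term_lower_bound:
  fixes p q r s :: real
  shows "s * (q^2 - p^2) - 2 * p * q * r \<ge> - (sqrt (r^2 + s^2) * (p^2 + q^2))"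
proof -
  have "(q^2 - p^2)^2 + (- 2 * p * q)^2 = (p^2 + q^2)^2"
    by (simp add: algebra_simps power2_eq_square)
  then have "sqrt ((q^2 - p^2)^2 + (- 2 * p * q)^2) = p^2 + q^2"
    by simp
  then have "\<bar>s * (q^2 - p^2) + r * (- 2 * p * q)\<bar> \<le> sqrt (s^2 + r^2) * (p^2 + q^2)"
    using abs_inner_le_norm_mult_norm [where a = s and b = r and c = "q^2 - p^2" and d = "- 2 * p * q"] by simp
  then show ?thesis
    by (simp add: add.commute mult.commute mult.left_commute)
qed

theorem lemma4p1:
  fixes w0 w1 w2 w3 w4 :: real
  shows "psi w0 w1 w2 w3 w4 \<ge> psi w0 (sqrt (w1^2 + w2^2)) 0 0 (sqrt (w3^2 + w4^2))"
proof -
  let ?C = "w4 * (w2^2 - w1^2) - 2 * w1 * w2 * w3"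
  let ?C\<^sub>0 = "- (sqrt (w3^2 + w4^2) * (w1^2 + w2^2))"
  have "psi w0 w1 w2 w3 w4 - psi w0 (sqrt (w1^2 + w2^2)) 0 0 (sqrt (w3^2 + w4^2))
      = 3 * sqrt 6 / 2 * (?C - ?C\<^sub>0)"
    by (simp add: psi_def field_simps)
  moreover have "?C - ?C\<^sub>0 \<ge> 0"
    using cubic_term_lower_bound [where p = w1 and q = w2 and r = w3 and s = w4] by linarith
  ultimately show ?thesis
    by (metis diff_ge_0_iff_ge divide_nonneg_pos mult_nonneg_nonneg real_sqrt_ge_zero
        zero_le_numeral zero_less_numeral)
qed

end
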